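(* Let $(\varphi_\alpha)_{\alpha>0}$ be a non-linear regularizing filter satisfying Assumption A. Then for every $\alpha>0$, $\operatorname{dom}(\mathbf{M}_\kappa^+\circ\Phi_{\alpha,\kappa})=\ell^2(\Lambda)$. Moreover, there exist proper, convex, lower semi-continuous $s_\lambda\colon\mathbb{R}\to\mathbb{R}\cup\{\infty\}$, $\lambda\in\Lambda$, with $s_\lambda\ge s_\lambda(0)=0$ and $\varphi_\alpha(\kappa_\lambda,\cdot)=\operatorname{prox}_{\alpha s_\lambda}$ for all $\alpha>0$, and the functional $\mathcal{R}((x_\lambda)_\lambda):=\sum_\lambda s_\lambda(\kappa_\lambda x_\lambda)$ on $\ell^2(\Lambda)$ is proper, convex, lower semi-continuous and norm-coercive, and satisfies for all $\alpha>0$ and all $z\in\ell^2(\Lambda)$: $$\mathbf{M}_\kappa^+\circ\Phi_{\alpha,\kappa}(z)=\operatorname{argmin}_{x\in\ell^2(\Lambda)}\tfrac12\|\mathbf{M}_\kappa x-z\|^2+\alpha\mathcal{R}(x).$$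
   Context: $\Lambda$ is an at most countable index set and $\kappa=(\kappa_\lambda)_{\lambda\in\Lambda}\in(0,\infty)^\Lambda$ with $\sup_\lambda\kappa_\lambda<\infty$. $\mathbf{M}_\kappa\colon\ell^2(\Lambda)\to\ell^2(\Lambda)$, $(x_\lambda)\mapsto(\kappa_\lambda x_\lambda)$; $\mathbf{M}_\kappa^+$ is its Moore–Penrose inverse, with domain $\{(c_\lambda)\in\ell^2:(c_\lambda/\kappa_\lambda)\in\ell^2\}$ and $\mathbf{M}_\kappa^+((c_\lambda))=(c_\lambda/\kappa_\lambda)$. A non-linear regularizing filter is a family $(\varphi_\alpha)_{\alpha>0}$ of functions $\varphi_\alpha\colon(0,\infty)\times\mathbb{R}\to\mathbb{R}$ such that for all $\alpha,\kappa>0$: (F1) $\varphi_\alpha(\kappa,\cdot)$ is non-decreasing; (F2) $\varphi_\alpha(\kappa,\cdot)$ is 1-Lipschitz; (F3) $\varphi_\alpha(\kappa,0)=0$; (F4) $\lim_{\alpha\to0}\varphi_\alpha(\kappa,c)=c$ for all $c\in\mathbb{R}$. $\Phi_{\alpha,\kappa}((c_\lambda))=(\varphi_\alpha(\kappa_\lambda,c_\lambda))_\lambda$; $\operatorname{dom}(\mathbf{M}_\kappa^+\circ\Phi_{\alpha,\kappa})=\{z\in\ell^2(\Lambda):\Phi_{\alpha,\kappa}(z)\in\operatorname{dom}(\mathbf{M}_\kappa^+)\}$. Assumption A: (A1) for all $\kappa>0$ and $y\in\mathbb{R}$, the set $\big(\varphi_\alpha(\kappa,\cdot)^{-1}(y)-y\big)/\alpha=\{(w-y)/\alpha:\varphi_\alpha(\kappa,w)=y\}$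 does not depend on $\alpha>0$; (A2) for some $\tilde\alpha>0$ there exist $b,c>0$ such that for all $\kappa>0$ and all $x\in\mathbb{R}$: $|x|\le\min\big(\varphi_{\tilde\alpha}(\kappa,\cdot)^{-1}(c\kappa)\big)\Rightarrow|\varphi_{\tilde\alpha}(\kappa,x)|\le\frac{\kappa^2}{\kappa^2+\tilde\alpha b}|x|$ (here $\min$ of the closed interval $\varphi_{\tilde\alpha}(\kappa,\cdot)^{-1}(c\kappa)$ is its smallest element). $\operatorname{prox}_f(x)=\operatorname{argmin}_y\tfrac12|x-y|^2+f(y)$. A functional $\mathcal{R}$ is norm-coercive if $\mathcal{R}(x^k)\to\infty$ for every sequence $(x^k)$ in $\operatorname{dom}(\mathcal{R})$ with $\|x^k\|\to\infty$. *)

theory Defs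
  imports "HOL-Analysis.Analysis"
begin

text \<open>The index set Lambda is the (at most countable) universe of a countable type 'i.
  Sequence spaces are represented by functions 'i => real.\<close>

definition l2 :: "('i \<Rightarrow> real) set" where
  "l2 = {x. (\<lambda>i. (x i)\<^sup>2) summable_on UNIV}"

definition l2norm :: "('i \<Rightarrow> real) \<Rightarrow> real" where
  "l2norm x = sqrt (\<Sum>\<^sub>\<infinity>i. (x i)\<^sup>2)"

definition Mk :: "('i \<Rightarrow> real) \<Rightarrow> ('i \<Rightarrow> real) \<Rightarrow> ('i \<Rightarrow> real)" where
  "Mk \<kappa> x = (\<lambda>i. \<kappa> i * x i)"

definition dom_Mk_pinv :: "('i \<Rightarrow> real) \<Rightarrow> ('i \<Rightarrow> real) set" where
  "dom_Mk_pinv \<kappa> = {c \<in> l2. (\<lambda>i. c i / \<kappa> i) \<in> l2}"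

definition Mk_pinv :: "('i \<Rightarrow> real) \<Rightarrow> ('i \<Rightarrow> real) \<Rightarrow> ('i \<Rightarrow> real)" where
  "Mk_pinv \<kappa> c = (\<lambda>i. c i / \<kappa> i)"

definition Phi :: "(real \<Rightarrow> real \<Rightarrow> real \<Rightarrow> real) \<Rightarrow> real \<Rightarrow> ('i \<Rightarrow> real) \<Rightarrow> ('i \<Rightarrow> real) \<Rightarrow> ('i \<Rightarrow> real)" where
  "Phi \<phi> \<alpha> \<kappa> c = (\<lambda>i. \<phi> \<alpha> (\<kappa> i) (c i))"

definition dom_Mk_pinv_Phi :: "(real \<Rightarrow> real \<Rightarrow> real \<Rightarrow> real) \<Rightarrow> real \<Rightarrow> ('i \<Rightarrow> real) \<Rightarrow> ('i \<Rightarrow> real) set" where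
  "dom_Mk_pinv_Phi \<phi> \<alpha> \<kappa> = {z \<in> l2. Phi \<phi> \<alpha> \<kappa> z \<in> dom_Mk_pinv \<kappa>}"

text \<open>Non-linear regularizing filter: \<phi> \<alpha> \<kappa> c = phi_alpha(kappa, c).\<close>
definition nonlinear_reg_filter :: "(real \<Rightarrow> real \<Rightarrow> real \<Rightarrow> real) \<Rightarrow> bool" where
  "nonlinear_reg_filter \<phi> \<longleftrightarrow>
    (\<forall>\<alpha>>0. \<forall>k>0.
      mono (\<phi> \<alpha> k) \<and>
      (\<forall>x y. \<bar>\<phi> \<alpha> k x - \<phi> \<alpha> k y\<bar> \<le> \<bar>x - y\<bar>) \<and>
      \<phi> \<alpha> k 0 = 0) \<and>
    (\<forall>k>0. \<forall>c. ((\<lambda>\<alpha>. \<phi> \<alpha> k c) \<longlongrightarrow> c) (at_right 0))"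

text \<open>Assumption A.  In (A2), "|x| <= min of the preimage of c*kappa" is written as
  "|x| is a lower bound of the preimage" (equal to the minimum for a nonempty closed
  interval bounded below).\<close>
definition assumption_A :: "(real \<Rightarrow> real \<Rightarrow> real \<Rightarrow> real) \<Rightarrow> bool" where
  "assumption_A \<phi> \<longleftrightarrow>
    (\<forall>k>0. \<forall>y. \<forall>\<alpha>>0. \<forall>\<beta>>0.
        {(w - y) / \<alpha> | w. \<phi> \<alpha> k w = y} = {(w - y) / \<beta> | w. \<phi> \<beta> k w = y}) \<and>
    (\<exists>\<alpha>t>0. \<exists>b>0. \<exists>c>0. \<forall>k>0. \<forall>x.
        (\<forall>w. \<phi> \<alpha>t k w = c * k \<longrightarrow> \<bar>x\<bar> \<le> w) \<longrightarrow>
        \<bar>\<phi> \<alpha>t k x\<bar> \<le> k\<^sup>2 / (k\<^sup>2 + \<alpha>t * b) * \<bar>x\<bar>)"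

definition argmin_on :: "'a set \<Rightarrow> ('a \<Rightarrow> 'b::order) \<Rightarrow> 'a set" where
  "argmin_on D F = {y \<in> D. \<forall>z\<in>D. F y \<le> F z}"

text \<open>Functions R -> R \<union> {\<infinity>} that are nonnegative are represented as ennreal-valued.\<close>
definition proper_fun :: "'a set \<Rightarrow> ('a \<Rightarrow> ennreal) \<Rightarrow> bool" where
  "proper_fun D F \<longleftrightarrow> (\<exists>x\<in>D. F x \<noteq> \<infinity>)"

definition convex_fun_on :: "'a::real_vector set \<Rightarrow> ('a \<Rightarrow> ennreal) \<Rightarrow> bool" where
  "convex_fun_on D F \<longleftrightarrow> (\<forall>x\<in>D. \<forall>y\<in>D. \<forall>t::real. 0 < t \<and> t < 1 \<longrightarrow>
      F ((1 - t) *\<^sub>R x + t *\<^sub>R y) \<le> ennreal (1 - t) * F x + ennreal t * F y)"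

definition convex_l2 :: "(('i \<Rightarrow> real) \<Rightarrow> ennreal) \<Rightarrow> bool" where
  "convex_l2 F \<longleftrightarrow> (\<forall>x\<in>l2. \<forall>y\<in>l2. \<forall>t::real. 0 < t \<and> t < 1 \<longrightarrow>
      F (\<lambda>i. (1 - t) * x i + t * y i) \<le> ennreal (1 - t) * F x + ennreal t * F y)"

definition lsc_real :: "(real \<Rightarrow> ennreal) \<Rightarrow> bool" where
  "lsc_real F \<longleftrightarrow> (\<forall>x X. X \<longlonglongrightarrow> x \<longrightarrow> F x \<le> liminf (\<lambda>n. F (X n)))"

definition lsc_l2 :: "(('i \<Rightarrow> real) \<Rightarrow> ennreal) \<Rightarrow> bool" where
  "lsc_l2 F \<longleftrightarrow> (\<forall>x\<in>l2. \<forall>X. (\<forall>n. X n \<in> l2) \<longrightarrow> (\<lambda>n. l2norm (\<lambda>i. X n i - x i)) \<longlonglongrightarrow> 0 \<longrightarrow>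
      F x \<le> liminf (\<lambda>n. F (X n)))"

definition norm_coercive_l2 :: "(('i \<Rightarrow> real) \<Rightarrow> ennreal) \<Rightarrow> bool" where
  "norm_coercive_l2 F \<longleftrightarrow> (\<forall>X. (\<forall>n. X n \<in> l2 \<and> F (X n) \<noteq> \<infinity>) \<longrightarrow>
      filterlim (\<lambda>n. l2norm (X n)) at_top sequentially \<longrightarrow> (\<lambda>n. F (X n)) \<longlonglongrightarrow> \<infinity>)"

end

theory Submission
  imports Defs
begin

text \<open>Fix a reference parameter \<open>a\<close>. Each scalar filter \<open>g = \<phi> a \<kappa>\<close> is monotone and
  1-Lipschitz, and such a map is the proximal map of \<open>a s\<close> for a convex \<open>s\<close> that has the
  subgradient \<open>(w - g w) / a\<close> at \<open>g w\<close>: take for \<open>s\<close> the supremum of the corresponding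
  affine minorants, whose values are fixed by a primitive of \<open>g\<close>; co-coercivity of \<open>g\<close>
  makes every minorant touch \<open>s\<close> at its own point \<open>g w\<close>. Assumption (A1) says that the slopes
  \<open>(w - y) / \<alpha>\<close> over the preimages of \<open>y\<close> do not depend on \<open>\<alpha>\<close>, so the same \<open>s\<close> also
  represents \<open>\<phi> \<alpha> \<kappa>\<close> as the proximal map of \<open>\<alpha> s\<close>. Assumption (A2) gives the growth
  \<open>s (\<kappa> t) \<ge> b/4 min (t\<^sup>2) (2 c \<bar>t\<bar>)\<close>, uniformly in \<open>\<kappa>\<close>; it makes \<open>\<Phi>(z) / \<kappa>\<close>
  square summable and \<open>R\<close> norm-coercive. Everything else about the separable functional \<open>R\<close>
  reduces to its components, with Fatou's lemma for lower semicontinuity.\<close>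

lemma DERIV_sign_change_imp_minimum:
  fixes f f' :: "real \<Rightarrow> real"
  assumes deriv: "\<And>x. (f has_real_derivative f' x) (at x)"
    and nonpos: "\<And>x. x \<le> x0 \<Longrightarrow> f' x \<le> 0"
    and nonneg: "\<And>x. x0 \<le> x \<Longrightarrow> 0 \<le> f' x"
  shows "f x0 \<le> f y"
proof (cases "y \<le> x0")
  case True
  then show ?thesis
    by (intro deriv_nonpos_imp_antimono[of y x0 f f']) (auto intro: deriv nonpos)
next
  case False
  then show ?thesis
    by (intro deriv_nonneg_imp_mono[of x0 y f f']) (auto intro: deriv nonneg)
qed

lemma lipschitz_gradient_upper_bound:
  fixes H g :: "real \<Rightarrow> real"
  assumes deriv: "\<And>x. (H has_real_derivative g x) (at x)"
    and lip: "\<And>x y. \<bar>g x - g y\<bar> \<le> \<bar>x - y\<bar>"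
  shows "H y \<le> H x + g x * (y - x) + (y - x)\<^sup>2 / 2"
proof -
  have "H x + g x * (x - x) + (x - x)\<^sup>2 / 2 - H x \<le> H x + g x * (y - x) + (y - x)\<^sup>2 / 2 - H y"
  proof (rule DERIV_sign_change_imp_minimum[where f = "\<lambda>y. H x + g x * (y - x) + (y - x)\<^sup>2 / 2 - H y"])
    fix u
    show "((\<lambda>y. H x + g x * (y - x) + (y - x)\<^sup>2 / 2 - H y) has_real_derivative
        g x + (u - x) - g u) (at u)"
      by (auto intro!: derivative_eq_intros deriv)
    show "u \<le> x \<Longrightarrow> g x + (u - x) - g u \<le> 0"
      using lip[of u x] by arith
    show "x \<le> u \<Longrightarrow> 0 \<le> g x + (u - x) - g u"
      using lip[of u x] by arith
  qed
  then show ?thesis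
    by simp
qed

text \<open>Baillon-Haddad: evaluate the convex function \<open>H - g w * id\<close>, which is minimal at \<open>w\<close>,
  at the point \<open>w' - (g w' - g w)\<close> and use the quadratic upper bound there.\<close>

lemma monotone_lipschitz_cocoercive:
  fixes H g :: "real \<Rightarrow> real"
  assumes deriv: "\<And>x. (H has_real_derivative g x) (at x)"
    and mono: "mono g"
    and lip: "\<And>x y. \<bar>g x - g y\<bar> \<le> \<bar>x - y\<bar>"
  shows "H w + g w * (w' - w) + (g w' - g w)\<^sup>2 / 2 \<le> H w'"
proof -
  define d where "d = g w' - g w"
  have "H w - g w * w \<le> H (w' - d) - g w * (w' - d)"
  proof (rule DERIV_sign_change_imp_minimum[where f = "\<lambda>y. H y - g w * y"])
    fix u
    show "((\<lambda>y. H y - g w * y) has_real_derivative g u - g w) (at u)"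
      by (auto intro!: derivative_eq_intros deriv)
    show "u \<le> w \<Longrightarrow> g u - g w \<le> 0" "w \<le> u \<Longrightarrow> 0 \<le> g u - g w"
      using mono by (auto simp: mono_def)
  qed
  moreover have "H (w' - d) \<le> H w' - g w' * d + d\<^sup>2 / 2"
    using lipschitz_gradient_upper_bound[OF deriv lip, where x = w' and y = "w' - d"] by simp
  moreover have "g w' * d - g w * d = d\<^sup>2"
    by (simp add: d_def power2_eq_square algebra_simps)
  ultimately show ?thesis
    unfolding d_def[symmetric] by (simp add: right_diff_distrib)
qed

definition primitive :: "(real \<Rightarrow> real) \<Rightarrow> real \<Rightarrow> real" where
  "primitive g x = (LBINT t=0..x. g t)"

lemma primitive_0 [simp]: "primitive g 0 = 0"
  unfolding primitive_def zero_ereal_def by (rule interval_integral_endpoints_same)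

lemma primitive_has_real_derivative:
  assumes "continuous_on UNIV g"
  shows "(primitive g has_real_derivative g x) (at x)"
proof -
  define r where "r = \<bar>x\<bar> + 1"
  have "-r < x \<and> x < r"
    using abs_ge_self[of x] abs_ge_minus_self[of x] unfolding r_def by linarith
  then have "at x within {-r..r} = at x"
    by (intro at_within_interior) simp
  moreover have "(primitive g has_real_derivative g x) (at x within {-r..r})"
    unfolding primitive_def has_real_derivative_iff_has_vector_derivative r_def zero_ereal_def
    by (intro interval_integral_FTC2 continuous_on_subset[OF assms]) auto
  ultimately show ?thesis
    by simp
qed

lemma product_lower_bound_nonneg:
  fixes x y u q :: real
  assumes "q < 1" "\<bar>u\<bar> \<le> q * x" "q * x \<le> y / 2" "0 \<le> x"
  shows "(1 - q) * x * (y / 2) \<le> (x - u) * (y - u)"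
proof -
  have "q * x \<le> 1 * x"
    using assms by (intro mult_right_mono) auto
  then have "(1 - q) * x \<le> x - u" "y / 2 \<le> y - u" "0 \<le> (1 - q) * x" "0 \<le> y / 2"
    using assms by (auto simp: abs_le_iff algebra_simps)
  then show ?thesis
    by (intro mult_mono) auto
qed

lemma product_lower_bound:
  fixes x y u q :: real
  assumes "q < 1" "\<bar>u\<bar> \<le> q * \<bar>x\<bar>" "q * \<bar>x\<bar> \<le> \<bar>y\<bar> / 2" "0 \<le> x * y"
  shows "(1 - q) * \<bar>x\<bar> * \<bar>y\<bar> / 2 \<le> (x - u) * (y - u)"
proof (cases "0 \<le> x \<and> 0 \<le> y")
  case True
  then have "(1 - q) * x * (y / 2) \<le> (x - u) * (y - u)"
    using assms by (intro product_lower_bound_nonneg) simp_all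
  then show ?thesis
    using True by simp
next
  case False
  with \<open>0 \<le> x * y\<close> have "x \<le> 0" "y \<le> 0"
    by (auto simp: zero_le_mult_iff)
  then have "(1 - q) * \<bar>x\<bar> * \<bar>y\<bar> / 2 = (1 - q) * (- x) * (- y / 2)"
    by simp
  also have "\<dots> \<le> (- x - (- u)) * (- y - (- u))"
    using assms \<open>x \<le> 0\<close> \<open>y \<le> 0\<close> by (intro product_lower_bound_nonneg) simp_all
  also have "\<dots> = (x - u) * (y - u)"
    by (simp add: algebra_simps)
  finally show ?thesis .
qed

lemma lower_bound_scaling:
  fixes a b c k t :: real
  assumes "a > 0" "b > 0" "k > 0"
  defines "q \<equiv> k\<^sup>2 / (k\<^sup>2 + a * b)" and "m \<equiv> min (\<bar>t\<bar> / 2) c"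
  shows "(1 - q) * (k * m / q) * \<bar>k * t\<bar> / 2 / a = b / 4 * min (t\<^sup>2) (2 * c * \<bar>t\<bar>)"
proof -
  have "0 < k\<^sup>2" "0 < k\<^sup>2 + a * b"
    using assms by (simp_all add: add_pos_pos)
  then have "0 < q" and "(1 - q) * k\<^sup>2 = q * (a * b)"
    unfolding q_def by (simp_all add: field_simps)
  have "(1 - q) * (k * m / q) = ((1 - q) * k\<^sup>2) * m / (q * k)"
    using \<open>0 < q\<close> \<open>k > 0\<close> by (simp add: field_simps power2_eq_square)
  also have "\<dots> = a * b * m / k"
    unfolding \<open>(1 - q) * k\<^sup>2 = q * (a * b)\<close> using \<open>0 < q\<close> by simp
  finally have "(1 - q) * (k * m / q) * \<bar>k * t\<bar> / 2 / a = a * b * m / k * (k * \<bar>t\<bar>) / 2 / a"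
    using \<open>k > 0\<close> by (simp add: abs_mult)
  also have "\<dots> = b / 2 * (m * \<bar>t\<bar>)"
    using \<open>a > 0\<close> \<open>k > 0\<close> by (simp add: field_simps)
  also have "m * \<bar>t\<bar> = min (t\<^sup>2) (2 * c * \<bar>t\<bar>) / 2"
    by (simp add: m_def min_mult_distrib_right min_divide_distrib_right power2_eq_square)
  finally show ?thesis
    by simp
qed

section \<open>Suprema of affine functions and proximal minimisers\<close>

lemma ennreal_add_le: "ennreal (p + q) \<le> ennreal p + ennreal q"
proof -
  have "ennreal (p + q) \<le> ennreal (max p 0 + max q 0)"
    by (rule ennreal_leI) simp
  also have "\<dots> = ennreal p + ennreal q"
    by (subst ennreal_plus) (auto simp: max_def ennreal_eq_0_iff)
  finally show ?thesis .
qed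

lemma convex_fun_on_SUP_affine:
  fixes h :: "'w \<Rightarrow> real \<Rightarrow> real"
  assumes affine: "\<And>w t x y. h w ((1 - t) * x + t * y) = (1 - t) * h w x + t * h w y"
  shows "convex_fun_on UNIV (\<lambda>y. SUP w. ennreal (h w y))"
  unfolding convex_fun_on_def
proof (intro ballI allI impI)
  fix x y :: real and t :: real
  assume t: "0 < t \<and> t < 1"
  show "(SUP w. ennreal (h w ((1 - t) *\<^sub>R x + t *\<^sub>R y)))
      \<le> ennreal (1 - t) * (SUP w. ennreal (h w x)) + ennreal t * (SUP w. ennreal (h w y))"
  proof (rule SUP_least)
    fix w
    have "ennreal (h w ((1 - t) *\<^sub>R x + t *\<^sub>R y)) \<le> ennreal ((1 - t) * h w x) + ennreal (t * h w y)"
      unfolding affine real_scaleR_def by (rule ennreal_add_le)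
    also have "\<dots> = ennreal (1 - t) * ennreal (h w x) + ennreal t * ennreal (h w y)"
      using t by (simp add: ennreal_mult')
    also have "\<dots> \<le> ennreal (1 - t) * (SUP w. ennreal (h w x)) + ennreal t * (SUP w. ennreal (h w y))"
      by (intro add_mono mult_left_mono SUP_upper) auto
    finally show "ennreal (h w ((1 - t) *\<^sub>R x + t *\<^sub>R y))
        \<le> ennreal (1 - t) * (SUP w. ennreal (h w x)) + ennreal t * (SUP w. ennreal (h w y))" .
  qed
qed

lemma lsc_real_SUP_continuous:
  fixes h :: "'w \<Rightarrow> real \<Rightarrow> real"
  assumes cont: "\<And>w x. isCont (h w) x"
  shows "lsc_real (\<lambda>y. SUP w. ennreal (h w y))"
  unfolding lsc_real_def
proof (intro allI impI)
  fix x and X :: "nat \<Rightarrow> real"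
  assume X: "X \<longlonglongrightarrow> x"
  show "(SUP w. ennreal (h w x)) \<le> liminf (\<lambda>n. SUP w. ennreal (h w (X n)))"
  proof (rule SUP_least)
    fix w
    have "(\<lambda>n. ennreal (h w (X n))) \<longlonglongrightarrow> ennreal (h w x)"
      by (intro tendsto_ennrealI isCont_tendsto_compose[OF cont X])
    then have "ennreal (h w x) = liminf (\<lambda>n. ennreal (h w (X n)))"
      by (simp add: lim_imp_Liminf)
    also have "\<dots> \<le> liminf (\<lambda>n. SUP w. ennreal (h w (X n)))"
      by (intro Liminf_mono always_eventually allI SUP_upper) simp
    finally show "ennreal (h w x) \<le> liminf (\<lambda>n. SUP w. ennreal (h w (X n)))" .
  qed
qed

lemma argmin_on_eq_singleton:
  fixes F :: "'a \<Rightarrow> 'b::linorder"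
  assumes "p \<in> D" "\<And>y. y \<in> D \<Longrightarrow> y \<noteq> p \<Longrightarrow> F p < F y"
  shows "argmin_on D F = {p}"
  using assms unfolding argmin_on_def by (force simp: not_le[symmetric])

lemma argmin_on_singleton_le:
  assumes "argmin_on D F = {p}" "y \<in> D"
  shows "F p \<le> F y"
  using assms unfolding argmin_on_def by blast

lemma argmin_on_singleton_less:
  fixes F :: "'a \<Rightarrow> 'b::linorder"
  assumes "argmin_on D F = {p}" "y \<in> D" "y \<noteq> p"
  shows "F p < F y"
proof -
  have "y \<notin> argmin_on D F"
    using assms(1,3) by simp
  then obtain w where "w \<in> D" "F w < F y"
    using assms(2) unfolding argmin_on_def by (auto simp: not_le)
  with argmin_on_singleton_le[OF assms(1)] show ?thesis
    by (blast intro: le_less_trans)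
qed

lemma argmin_on_cong:
  assumes "\<And>x. x \<in> D \<Longrightarrow> F x = G x"
  shows "argmin_on D F = argmin_on D G"
  using assms unfolding argmin_on_def by auto

text \<open>The quadratic term contributes the strict excess \<open>(y - y0)\<^sup>2 / 2\<close> over the lower
  bound given by the subgradient \<open>(x - y0) / \<alpha>\<close>.\<close>

lemma prox_strict_minimum:
  fixes f :: "real \<Rightarrow> ennreal"
  assumes \<alpha>: "\<alpha> > 0" and f_y0: "f y0 = ennreal v" and v: "0 \<le> v"
    and subgradient: "\<And>y. ennreal (v + (x - y0) / \<alpha> * (y - y0)) \<le> f y"
    and "y \<noteq> y0"
  shows "ennreal ((x - y0)\<^sup>2 / 2) + ennreal \<alpha> * f y0 < ennreal ((x - y)\<^sup>2 / 2) + ennreal \<alpha> * f y"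
proof (cases "f y")
  case (real r)
  have "v + (x - y0) / \<alpha> * (y - y0) \<le> r"
    using subgradient[of y] real v by (auto simp: ennreal_le_iff2)
  then have "\<alpha> * v + (x - y0) * (y - y0) \<le> \<alpha> * r"
    using \<alpha> by (simp add: field_simps)
  moreover have "(x - y)\<^sup>2 = (x - y0)\<^sup>2 - 2 * (x - y0) * (y - y0) + (y - y0)\<^sup>2"
    by (simp add: power2_eq_square algebra_simps)
  moreover have "0 < (y - y0)\<^sup>2"
    using \<open>y \<noteq> y0\<close> by simp
  ultimately have "(x - y0)\<^sup>2 / 2 + \<alpha> * v < (x - y)\<^sup>2 / 2 + \<alpha> * r"
    by linarith
  then have "ennreal ((x - y0)\<^sup>2 / 2 + \<alpha> * v) < ennreal ((x - y)\<^sup>2 / 2 + \<alpha> * r)"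
    using v \<alpha> by (subst ennreal_less_iff) auto
  moreover have "ennreal ((x - y0)\<^sup>2 / 2) + ennreal \<alpha> * f y0 = ennreal ((x - y0)\<^sup>2 / 2 + \<alpha> * v)"
    using f_y0 v \<alpha> by (simp add: ennreal_mult ennreal_plus)
  moreover have "ennreal ((x - y)\<^sup>2 / 2) + ennreal \<alpha> * f y = ennreal ((x - y)\<^sup>2 / 2 + \<alpha> * r)"
    using real \<alpha> by (simp add: ennreal_mult ennreal_plus)
  ultimately show ?thesis
    by simp
next
  case top
  then show ?thesis
    using f_y0 \<alpha> by (simp add: ennreal_mult_eq_top_iff ennreal_mult_less_top)
qed

section \<open>The proximal generator of a shrinkage\<close>

locale shrinkage =
  fixes g :: "real \<Rightarrow> real"
  assumes mono: "mono g"
    and lipschitz: "\<And>x y. \<bar>g x - g y\<bar> \<le> \<bar>x - y\<bar>"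
    and zero: "g 0 = 0"

text \<open>If \<open>g\<close> is the proximal map of \<open>a s\<close>, then \<open>(w - g w) / a\<close> is a subgradient of \<open>s\<close> at
  \<open>g w\<close>. Integrating along \<open>w\<close> determines \<open>s (g w)\<close> up to a constant, which gives
  \<open>prox_value\<close>; \<open>s\<close> is the supremum of the resulting affine minorants. Truncation at \<open>0\<close> by
  \<^const>\<open>ennreal\<close> is harmless when \<open>g 0 = 0\<close>, since the minorant at \<open>w = 0\<close> then vanishes.\<close>

definition prox_value :: "real \<Rightarrow> (real \<Rightarrow> real) \<Rightarrow> real \<Rightarrow> real" where
  "prox_value a g w = (w * g w - (g w)\<^sup>2 / 2 - primitive g w) / a"

definition prox_minorant :: "real \<Rightarrow> (real \<Rightarrow> real) \<Rightarrow> real \<Rightarrow> real \<Rightarrow> real" where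
  "prox_minorant a g w y = prox_value a g w + (w - g w) / a * (y - g w)"

definition prox_generator :: "real \<Rightarrow> (real \<Rightarrow> real) \<Rightarrow> real \<Rightarrow> ennreal" where
  "prox_generator a g y = (SUP w. ennreal (prox_minorant a g w y))"

lemma prox_minorant_le_generator: "ennreal (prox_minorant a g w y) \<le> prox_generator a g y"
  unfolding prox_generator_def by (rule SUP_upper) simp

lemma prox_generator_convex: "convex_fun_on UNIV (prox_generator a g)"
proof -
  have affine: "c + m * ((1 - t) * x + t * y - e) = (1 - t) * (c + m * (x - e)) + t * (c + m * (y - e))"
    for c m e t x y :: real
    by (simp add: algebra_simps)
  show ?thesis
    unfolding prox_generator_def[abs_def]
    by (rule convex_fun_on_SUP_affine) (simp only: prox_minorant_def affine)
qed

lemma prox_generator_lsc: "lsc_real (prox_generator a g)"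
  unfolding prox_generator_def[abs_def] prox_minorant_def
  by (rule lsc_real_SUP_continuous) (intro continuous_intros)

context shrinkage
begin

lemma continuous: "continuous_on UNIV g"
proof (rule lipschitz_on_continuous_on)
  show "1-lipschitz_on UNIV g"
    using lipschitz by (simp add: lipschitz_on_def dist_real_def)
qed

lemma abs_le: "\<bar>g x\<bar> \<le> \<bar>x\<bar>"
  using lipschitz[of x 0] by (simp add: zero)

lemma prox_minorant_le_value:
  assumes "a > 0"
  shows "prox_minorant a g w' (g w) \<le> prox_value a g w"
proof -
  have "prox_value a g w - prox_minorant a g w' (g w)
      = (primitive g w' - (primitive g w + g w * (w' - w) + (g w' - g w)\<^sup>2 / 2)) / a"
    using assms by (simp add: prox_value_def prox_minorant_def field_simps power2_eq_square)
  moreover have "primitive g w + g w * (w' - w) + (g w' - g w)\<^sup>2 / 2 \<le> primitive g w'"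
    by (rule monotone_lipschitz_cocoercive[OF primitive_has_real_derivative[OF continuous] mono lipschitz])
  ultimately have "0 \<le> prox_value a g w - prox_minorant a g w' (g w)"
    using assms by simp
  then show ?thesis
    by simp
qed

lemma prox_value_0: "prox_value a g 0 = 0"
  by (simp add: prox_value_def zero)

lemma prox_value_nonneg:
  assumes "a > 0"
  shows "0 \<le> prox_value a g w"
  using prox_minorant_le_value[OF assms, of 0 w] by (simp add: prox_minorant_def prox_value_0 zero)

lemma prox_generator_at:
  assumes "a > 0"
  shows "prox_generator a g (g w) = ennreal (prox_value a g w)"
proof (rule antisym)
  show "prox_generator a g (g w) \<le> ennreal (prox_value a g w)"
    unfolding prox_generator_def using prox_minorant_le_value[OF assms]
    by (intro SUP_least ennreal_leI)
  show "ennreal (prox_value a g w) \<le> prox_generator a g (g w)"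
    using prox_minorant_le_generator[of a g w "g w"] by (simp add: prox_minorant_def)
qed

lemma prox_generator_0:
  assumes "a > 0"
  shows "prox_generator a g 0 = 0"
  using prox_generator_at[OF assms, of 0] by (simp add: zero prox_value_0)

lemma prox_generator_strict_minimum:
  assumes "a > 0" "\<alpha> > 0" and slope: "(x - g w) / \<alpha> = (w - g w) / a" and "y \<noteq> g w"
  shows "ennreal ((x - g w)\<^sup>2 / 2) + ennreal \<alpha> * prox_generator a g (g w)
    < ennreal ((x - y)\<^sup>2 / 2) + ennreal \<alpha> * prox_generator a g y"
proof (rule prox_strict_minimum[where f = "prox_generator a g", OF \<open>\<alpha> > 0\<close> prox_generator_at[OF \<open>a > 0\<close>, of w]
      prox_value_nonneg[OF \<open>a > 0\<close>, of w]])
  show "ennreal (prox_value a g w + (x - g w) / \<alpha> * (y' - g w)) \<le> prox_generator a g y'" for y'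
    using prox_minorant_le_generator[of a g w y'] unfolding prox_minorant_def slope .
qed (use \<open>y \<noteq> g w\<close> in simp)

text \<open>The smallest solution \<open>m\<close> of \<open>g m = v\<close> satisfies the hypothesis itself, so
  \<open>v = g m \<le> q m\<close>: every solution lies beyond \<open>v / q\<close>.\<close>

lemma contraction_below_level:
  assumes "v > 0" "q > 0"
    and hyp: "\<And>x. (\<forall>w. g w = v \<longrightarrow> \<bar>x\<bar> \<le> w) \<Longrightarrow> \<bar>g x\<bar> \<le> q * \<bar>x\<bar>"
    and x: "\<bar>x\<bar> \<le> v / q"
  shows "\<bar>g x\<bar> \<le> q * \<bar>x\<bar>"
proof (rule hyp, intro allI impI)
  fix w assume "g w = v"
  define P where "P = g -` {v}"
  have nonneg: "0 \<le> u" if "u \<in> P" for u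
  proof (rule ccontr)
    assume "\<not> 0 \<le> u"
    then have "g u \<le> g 0"
      using mono by (simp add: mono_def)
    with that \<open>v > 0\<close> show False
      by (simp add: P_def zero)
  qed
  have "closed P"
    unfolding P_def by (rule closed_vimage[OF closed_singleton continuous])
  moreover have "w \<in> P"
    using \<open>g w = v\<close> by (simp add: P_def)
  moreover have "bdd_below P"
    by (rule bdd_belowI[of _ 0]) (rule nonneg)
  ultimately have "Inf P \<in> P" and Inf_le: "Inf P \<le> w"
    by (auto intro: closed_contains_Inf cInf_lower)
  moreover have "0 \<le> Inf P"
    using \<open>w \<in> P\<close> nonneg by (intro cInf_greatest) auto
  ultimately have "v \<le> q * Inf P"
    using hyp[of "Inf P"] cInf_lower[OF _ \<open>bdd_below P\<close>] by (auto simp: P_def)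
  moreover have "q * \<bar>x\<bar> \<le> v"
    using x \<open>q > 0\<close> by (simp add: pos_le_divide_eq mult.commute)
  ultimately have "q * \<bar>x\<bar> \<le> q * Inf P"
    by linarith
  with \<open>q > 0\<close> Inf_le show "\<bar>x\<bar> \<le> w"
    by simp
qed

lemma prox_generator_ge_product:
  assumes "a > 0" "q < 1" "\<bar>g x\<bar> \<le> q * \<bar>x\<bar>" "q * \<bar>x\<bar> \<le> \<bar>y\<bar> / 2" "0 \<le> x * y"
  shows "ennreal ((1 - q) * \<bar>x\<bar> * \<bar>y\<bar> / 2 / a) \<le> prox_generator a g y"
proof -
  have "(1 - q) * \<bar>x\<bar> * \<bar>y\<bar> / 2 / a \<le> (x - g x) * (y - g x) / a"
    using product_lower_bound[OF assms(2-5)] \<open>a > 0\<close> by (intro divide_right_mono) auto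
  also have "\<dots> \<le> prox_minorant a g x y"
    unfolding prox_minorant_def using prox_value_nonneg[OF \<open>a > 0\<close>, of x] by simp
  finally have "ennreal ((1 - q) * \<bar>x\<bar> * \<bar>y\<bar> / 2 / a) \<le> ennreal (prox_minorant a g x y)"
    by (rule ennreal_leI)
  also have "\<dots> \<le> prox_generator a g y"
    by (rule prox_minorant_le_generator)
  finally show ?thesis .
qed

text \<open>The bound is read off the minorant at the point
  \<open>x\<close> of the sign of \<open>t\<close> with \<open>q \<bar>x\<bar> = k min (\<bar>t\<bar> / 2) c\<close>, which (A2) forces to be contracted
  by the factor \<open>q\<close>.\<close>

lemma prox_generator_lower_bound:
  assumes "a > 0" "b > 0" "c > 0" "k > 0"
    and A2: "\<And>x. (\<forall>w. g w = c * k \<longrightarrow> \<bar>x\<bar> \<le> w) \<Longrightarrow> \<bar>g x\<bar> \<le> k\<^sup>2 / (k\<^sup>2 + a * b) * \<bar>x\<bar>"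
  shows "ennreal (b / 4 * min (t\<^sup>2) (2 * c * \<bar>t\<bar>)) \<le> prox_generator a g (k * t)"
proof -
  define q where "q = k\<^sup>2 / (k\<^sup>2 + a * b)"
  define m where "m = min (\<bar>t\<bar> / 2) c"
  define x where "x = (if 0 \<le> t then k * m / q else - (k * m / q))"
  have "0 < k\<^sup>2" "k\<^sup>2 < k\<^sup>2 + a * b"
    using assms by simp_all
  then have q: "0 < q" "q < 1"
    unfolding q_def by (auto intro: divide_pos_pos simp only: divide_less_eq_1_pos)
  have m: "0 \<le> m" "m \<le> \<bar>t\<bar> / 2" "m \<le> c"
    using \<open>c > 0\<close> by (auto simp: m_def)
  have abs_x: "\<bar>x\<bar> = k * m / q"
    using m \<open>k > 0\<close> q by (simp add: x_def)
  have "\<bar>g x\<bar> \<le> q * \<bar>x\<bar>"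
  proof (rule contraction_below_level[of "c * k"])
    show "\<bar>x\<bar> \<le> c * k / q"
      unfolding abs_x using m \<open>k > 0\<close> q by (simp add: divide_right_mono)
  qed (use A2 assms q in \<open>auto simp: q_def\<close>)
  moreover have "q * \<bar>x\<bar> \<le> \<bar>k * t\<bar> / 2"
    unfolding abs_x using m \<open>k > 0\<close> q by (simp add: abs_mult)
  moreover have "0 \<le> x * (k * t)"
    using m \<open>k > 0\<close> q by (auto simp: x_def zero_le_mult_iff mult_le_0_iff)
  ultimately have "ennreal ((1 - q) * \<bar>x\<bar> * \<bar>k * t\<bar> / 2 / a) \<le> prox_generator a g (k * t)"
    using \<open>a > 0\<close> \<open>q < 1\<close> by (intro prox_generator_ge_product)
  then show ?thesis
    unfolding abs_x q_def m_def lower_bound_scaling[OF \<open>a > 0\<close> \<open>b > 0\<close> \<open>k > 0\<close>] .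
qed

end

section \<open>Regularizing filters as proximal maps\<close>

lemma reg_filter_shrinkage:
  assumes "nonlinear_reg_filter \<phi>" "\<alpha> > 0" "k > 0"
  shows "shrinkage (\<phi> \<alpha> k)"
  using assms unfolding nonlinear_reg_filter_def shrinkage_def by blast

text \<open>Assumption (A1) supplies a preimage \<open>w\<close> of \<open>\<phi> \<alpha> k x\<close> under the filter at the reference
  parameter \<open>a\<close> with the matching subgradient slope.\<close>

lemma reg_filter_prox_generator_strict_minimum:
  assumes filt: "nonlinear_reg_filter \<phi>" and "a > 0" "\<alpha> > 0" "k > 0"
    and A1: "{(w - \<phi> \<alpha> k x) / \<alpha> | w. \<phi> \<alpha> k w = \<phi> \<alpha> k x} = {(w - \<phi> \<alpha> k x) / a | w. \<phi> a k w = \<phi> \<alpha> k x}"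
    and "y \<noteq> \<phi> \<alpha> k x"
  shows "ennreal ((x - \<phi> \<alpha> k x)\<^sup>2 / 2) + ennreal \<alpha> * prox_generator a (\<phi> a k) (\<phi> \<alpha> k x)
    < ennreal ((x - y)\<^sup>2 / 2) + ennreal \<alpha> * prox_generator a (\<phi> a k) y"
proof -
  have "(x - \<phi> \<alpha> k x) / \<alpha> \<in> {(w - \<phi> \<alpha> k x) / a | w. \<phi> a k w = \<phi> \<alpha> k x}"
    unfolding A1[symmetric] by blast
  then obtain w where w: "\<phi> a k w = \<phi> \<alpha> k x" "(x - \<phi> a k w) / \<alpha> = (w - \<phi> a k w) / a"
    by auto
  have "shrinkage (\<phi> a k)"
    using filt \<open>a > 0\<close> \<open>k > 0\<close> by (rule reg_filter_shrinkage)
  from shrinkage.prox_generator_strict_minimum[OF this \<open>a > 0\<close> \<open>\<alpha> > 0\<close> w(2)]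
  show ?thesis
    using \<open>y \<noteq> \<phi> \<alpha> k x\<close> unfolding w(1) by blast
qed

lemma reg_filter_prox_generators:
  fixes \<phi> :: "real \<Rightarrow> real \<Rightarrow> real \<Rightarrow> real" and \<kappa> :: "'i \<Rightarrow> real"
  assumes \<kappa>: "\<And>i. \<kappa> i > 0" and filt: "nonlinear_reg_filter \<phi>" and A: "assumption_A \<phi>"
  obtains \<beta> \<gamma> :: real and s :: "'i \<Rightarrow> real \<Rightarrow> ennreal"
  where "\<beta> > 0" "\<gamma> > 0"
    and "\<And>i. convex_fun_on UNIV (s i)" "\<And>i. lsc_real (s i)" "\<And>i. s i 0 = 0"
    and "\<And>i \<alpha> x. \<alpha> > 0 \<Longrightarrow>
      argmin_on UNIV (\<lambda>y. ennreal ((x - y)\<^sup>2 / 2) + ennreal \<alpha> * s i y) = {\<phi> \<alpha> (\<kappa> i) x}"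
    and "\<And>i t. ennreal (\<beta> * min (t\<^sup>2) (\<gamma> * \<bar>t\<bar>)) \<le> s i (\<kappa> i * t)"
proof -
  note A1 = conjunct1[OF A[unfolded assumption_A_def], rule_format]
  obtain a b c where abc: "a > 0" "b > 0" "c > 0"
    and A2: "\<forall>k>0. \<forall>x. (\<forall>w. \<phi> a k w = c * k \<longrightarrow> \<bar>x\<bar> \<le> w) \<longrightarrow>
      \<bar>\<phi> a k x\<bar> \<le> k\<^sup>2 / (k\<^sup>2 + a * b) * \<bar>x\<bar>"
    using conjunct2[OF A[unfolded assumption_A_def]] by blast
  have g: "shrinkage (\<phi> a (\<kappa> i))" for i
    using filt \<open>a > 0\<close> \<kappa> by (rule reg_filter_shrinkage)
  show ?thesis
  proof (rule that[of "b / 4" "2 * c" "\<lambda>i. prox_generator a (\<phi> a (\<kappa> i))"])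
    show "argmin_on UNIV (\<lambda>y. ennreal ((x - y)\<^sup>2 / 2) + ennreal \<alpha> * prox_generator a (\<phi> a (\<kappa> i)) y)
        = {\<phi> \<alpha> (\<kappa> i) x}" if "\<alpha> > 0" for i \<alpha> x
      using reg_filter_prox_generator_strict_minimum[OF filt \<open>a > 0\<close> that \<kappa> A1[OF \<kappa> that \<open>a > 0\<close>]]
      by (intro argmin_on_eq_singleton) auto
    show "ennreal (b / 4 * min (t\<^sup>2) (2 * c * \<bar>t\<bar>)) \<le> prox_generator a (\<phi> a (\<kappa> i)) (\<kappa> i * t)" for i t
      using A2 \<kappa> by (intro shrinkage.prox_generator_lower_bound[OF g abc]) auto
    show "prox_generator a (\<phi> a (\<kappa> i)) 0 = 0" for i
      using shrinkage.prox_generator_0[OF g \<open>a > 0\<close>] .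
  qed (use abc in \<open>simp_all add: prox_generator_convex prox_generator_lsc\<close>)
qed

section \<open>Square-summable sequences\<close>

lemma l2_dominated:
  assumes "x \<in> l2" "\<And>i. (y i)\<^sup>2 \<le> C * (x i)\<^sup>2"
  shows "y \<in> l2"
proof -
  have "(\<lambda>i. C * (x i)\<^sup>2) summable_on UNIV"
    using assms(1) by (intro summable_on_cmult_right) (simp add: l2_def)
  then show ?thesis
    unfolding l2_def mem_Collect_eq by (rule summable_on_comparison_test) (use assms(2) in auto)
qed

lemma l2_diff:
  assumes "x \<in> l2" "y \<in> l2"
  shows "(\<lambda>i. x i - y i) \<in> l2"
proof -
  have "(\<lambda>i. 2 * (x i)\<^sup>2 + 2 * (y i)\<^sup>2) summable_on UNIV"
    using assms by (intro summable_on_add summable_on_cmult_right) (simp_all add: l2_def)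
  moreover have "(x i - y i)\<^sup>2 \<le> 2 * (x i)\<^sup>2 + 2 * (y i)\<^sup>2" for i
    using zero_le_power2[of "x i + y i"] by (simp add: power2_eq_square algebra_simps)
  ultimately show ?thesis
    unfolding l2_def mem_Collect_eq by (rule summable_on_comparison_test) auto
qed

lemma l2_mult_bounded:
  assumes "x \<in> l2" "\<And>i. \<bar>a i\<bar> \<le> K"
  shows "(\<lambda>i. a i * x i) \<in> l2"
proof (rule l2_dominated[OF assms(1), of _ "K\<^sup>2"])
  fix i
  have "\<bar>a i\<bar>\<^sup>2 \<le> K\<^sup>2"
    using assms(2)[of i] by (intro power_mono) auto
  then show "(a i * x i)\<^sup>2 \<le> K\<^sup>2 * (x i)\<^sup>2"
    by (simp add: power_mult_distrib mult_right_mono)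
qed

lemma l2norm_sq: "(l2norm x)\<^sup>2 = (\<Sum>\<^sub>\<infinity>i. (x i)\<^sup>2)"
  unfolding l2norm_def by (simp add: infsum_nonneg)

lemma l2norm_nonneg: "0 \<le> l2norm x"
  by (simp add: l2norm_def infsum_nonneg)

lemma l2_component_sq_le:
  assumes "x \<in> l2"
  shows "(x j)\<^sup>2 \<le> (\<Sum>\<^sub>\<infinity>i. (x i)\<^sup>2)"
proof -
  have "infsum (\<lambda>i. (x i)\<^sup>2) {j} \<le> infsum (\<lambda>i. (x i)\<^sup>2) UNIV"
    using assms by (intro infsum_mono_neutral) (auto simp: l2_def)
  then show ?thesis
    by simp
qed

lemma abs_le_l2norm:
  assumes "x \<in> l2"
  shows "\<bar>x j\<bar> \<le> l2norm x"
  unfolding l2norm_def using real_sqrt_le_mono[OF l2_component_sq_le[OF assms, of j]] by simp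

lemma ennreal_infsum:
  fixes f :: "'a \<Rightarrow> real"
  assumes "f summable_on A" "\<And>i. i \<in> A \<Longrightarrow> 0 \<le> f i"
  shows "ennreal (infsum f A) = (\<Sum>\<^sub>\<infinity>i\<in>A. ennreal (f i))"
proof -
  have "ennreal (infsum f A) = (SUP F\<in>{F. finite F \<and> F \<subseteq> A}. ennreal (sum f F))"
    by (rule infsum_nonneg_is_SUPREMUM_ennreal[OF assms])
  also have "\<dots> = (SUP F\<in>{F. finite F \<and> F \<subseteq> A}. (\<Sum>i\<in>F. ennreal (f i)))"
    using assms(2) by (intro SUP_cong refl) (auto simp: subset_iff)
  also have "\<dots> = (\<Sum>\<^sub>\<infinity>i\<in>A. ennreal (f i))"
    by (simp add: nonneg_infsum_complete)
  finally show ?thesis .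
qed

lemma ennreal_l2norm_sq_half:
  assumes "x \<in> l2"
  shows "ennreal ((l2norm x)\<^sup>2 / 2) = (\<Sum>\<^sub>\<infinity>i. ennreal ((x i)\<^sup>2 / 2))"
proof -
  have "(\<lambda>i. (x i)\<^sup>2 / 2) summable_on UNIV"
    using assms summable_on_cmult_left[of "\<lambda>i. (x i)\<^sup>2" UNIV "1 / 2"] by (simp add: l2_def)
  moreover have "(\<Sum>\<^sub>\<infinity>i. (x i)\<^sup>2) / 2 = (\<Sum>\<^sub>\<infinity>i. (x i)\<^sup>2 / 2)"
    using infsum_cmult_left'[where f = "\<lambda>i. (x i)\<^sup>2" and A = UNIV and c = "1 / 2"] by simp
  ultimately show ?thesis
    unfolding l2norm_sq by (simp add: ennreal_infsum)
qed

lemma infsum_ennreal_cmult: "(\<Sum>\<^sub>\<infinity>i\<in>A. (c::ennreal) * f i) = c * (\<Sum>\<^sub>\<infinity>i\<in>A. f i)"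
  by (simp add: nonneg_infsum_complete SUP_mult_left_ennreal sum_distrib_left)

lemma infsum_ennreal_split:
  fixes h :: "'a \<Rightarrow> ennreal"
  shows "(\<Sum>\<^sub>\<infinity>i. h i) = h j + (\<Sum>\<^sub>\<infinity>i\<in>-{j}. h i)"
proof -
  have "(\<Sum>\<^sub>\<infinity>i\<in>{j} \<union> -{j}. h i) = (\<Sum>\<^sub>\<infinity>i\<in>{j}. h i) + (\<Sum>\<^sub>\<infinity>i\<in>-{j}. h i)"
    by (rule infsum_Un_disjoint) (auto intro: nonneg_summable_on_complete)
  then show ?thesis
    by simp
qed

lemma liminf_add_ennreal:
  fixes f g :: "nat \<Rightarrow> ennreal"
  shows "liminf f + liminf g \<le> liminf (\<lambda>n. f n + g n)"
proof -
  have inc: "incseq (\<lambda>N. INF m\<in>{N..}. h m)" for h :: "nat \<Rightarrow> ennreal"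
    unfolding incseq_def by (auto intro!: INF_superset_mono)
  have "liminf f + liminf g = (SUP N. (INF m\<in>{N..}. f m) + (INF m\<in>{N..}. g m))"
    unfolding liminf_SUP_INF by (rule ennreal_SUP_add[OF inc inc, symmetric])
  also have "\<dots> \<le> (SUP N. INF m\<in>{N..}. f m + g m)"
    by (intro SUP_mono) (auto intro!: INF_greatest add_mono INF_lower)
  finally show ?thesis
    unfolding liminf_SUP_INF .
qed

lemma liminf_sum_ennreal:
  fixes f :: "nat \<Rightarrow> 'a \<Rightarrow> ennreal"
  assumes "finite F"
  shows "(\<Sum>i\<in>F. liminf (\<lambda>n. f n i)) \<le> liminf (\<lambda>n. \<Sum>i\<in>F. f n i)"
  using assms
proof (induction F rule: finite_induct)
  case (insert j F)
  then have "(\<Sum>i\<in>insert j F. liminf (\<lambda>n. f n i)) \<le> liminf (\<lambda>n. f n j) + liminf (\<lambda>n. \<Sum>i\<in>F. f n i)"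
    by (simp add: add_mono)
  also have "\<dots> \<le> liminf (\<lambda>n. \<Sum>i\<in>insert j F. f n i)"
    using liminf_add_ennreal[of "\<lambda>n. f n j"] insert by simp
  finally show ?case .
qed simp

lemma fatou_infsum_ennreal:
  fixes f :: "nat \<Rightarrow> 'a \<Rightarrow> ennreal"
  shows "(\<Sum>\<^sub>\<infinity>i. liminf (\<lambda>n. f n i)) \<le> liminf (\<lambda>n. \<Sum>\<^sub>\<infinity>i. f n i)"
  unfolding nonneg_infsum_complete[OF zero_le]
proof (rule SUP_least)
  fix F :: "'a set" assume F: "F \<in> {F. finite F \<and> F \<subseteq> UNIV}"
  then have "(\<Sum>i\<in>F. liminf (\<lambda>n. f n i)) \<le> liminf (\<lambda>n. \<Sum>i\<in>F. f n i)"
    by (intro liminf_sum_ennreal) auto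
  also have "\<dots> \<le> liminf (\<lambda>n. SUP F\<in>{F. finite F \<and> F \<subseteq> UNIV}. \<Sum>i\<in>F. f n i)"
    using F by (intro Liminf_mono always_eventually allI SUP_upper)
  finally show "(\<Sum>i\<in>F. liminf (\<lambda>n. f n i)) \<le> liminf (\<lambda>n. SUP F\<in>{F. finite F \<and> F \<subseteq> UNIV}. \<Sum>i\<in>F. f n i)" .
qed

section \<open>Separable functionals on square-summable sequences\<close>

lemma convex_l2_separable:
  fixes s :: "'i \<Rightarrow> real \<Rightarrow> ennreal" and \<kappa> :: "'i \<Rightarrow> real"
  assumes "\<And>i. convex_fun_on UNIV (s i)"
  shows "convex_l2 (\<lambda>x. \<Sum>\<^sub>\<infinity>i. s i (\<kappa> i * x i))"
  unfolding convex_l2_def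
proof (intro ballI allI impI)
  fix x y :: "'i \<Rightarrow> real" and t :: real
  assume t: "0 < t \<and> t < 1"
  have "(\<Sum>\<^sub>\<infinity>i. s i (\<kappa> i * ((1 - t) * x i + t * y i)))
      \<le> (\<Sum>\<^sub>\<infinity>i. ennreal (1 - t) * s i (\<kappa> i * x i) + ennreal t * s i (\<kappa> i * y i))"
  proof (rule infsum_mono)
    fix i
    have "\<kappa> i * ((1 - t) * x i + t * y i) = (1 - t) *\<^sub>R (\<kappa> i * x i) + t *\<^sub>R (\<kappa> i * y i)"
      by (simp add: algebra_simps)
    then show "s i (\<kappa> i * ((1 - t) * x i + t * y i))
        \<le> ennreal (1 - t) * s i (\<kappa> i * x i) + ennreal t * s i (\<kappa> i * y i)"
      using assms[of i] t unfolding convex_fun_on_def by simp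
  qed (auto intro: nonneg_summable_on_complete)
  also have "\<dots> = ennreal (1 - t) * (\<Sum>\<^sub>\<infinity>i. s i (\<kappa> i * x i)) + ennreal t * (\<Sum>\<^sub>\<infinity>i. s i (\<kappa> i * y i))"
    unfolding infsum_ennreal_cmult[symmetric]
    by (rule infsum_add) (auto intro: nonneg_summable_on_complete)
  finally show "(\<Sum>\<^sub>\<infinity>i. s i (\<kappa> i * ((1 - t) * x i + t * y i)))
      \<le> ennreal (1 - t) * (\<Sum>\<^sub>\<infinity>i. s i (\<kappa> i * x i)) + ennreal t * (\<Sum>\<^sub>\<infinity>i. s i (\<kappa> i * y i))" .
qed

lemma lsc_l2_separable:
  fixes s :: "'i \<Rightarrow> real \<Rightarrow> ennreal" and \<kappa> :: "'i \<Rightarrow> real"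
  assumes "\<And>i. lsc_real (s i)"
  shows "lsc_l2 (\<lambda>x. \<Sum>\<^sub>\<infinity>i. s i (\<kappa> i * x i))"
  unfolding lsc_l2_def
proof (intro ballI allI impI)
  fix x :: "'i \<Rightarrow> real" and X :: "nat \<Rightarrow> 'i \<Rightarrow> real"
  assume x: "x \<in> l2" and X: "\<forall>n. X n \<in> l2" and lim: "(\<lambda>n. l2norm (\<lambda>i. X n i - x i)) \<longlonglongrightarrow> 0"
  have "(\<lambda>n. X n i) \<longlonglongrightarrow> x i" for i
  proof -
    have "(\<lambda>n. X n i - x i) \<longlonglongrightarrow> 0"
      using abs_le_l2norm[OF l2_diff[OF X[rule_format] x]]
      by (intro Lim_null_comparison[OF _ lim]) simp
    then show ?thesis
      by (rule LIM_zero_cancel)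
  qed
  then have "(\<lambda>n. \<kappa> i * X n i) \<longlonglongrightarrow> \<kappa> i * x i" for i
    by (intro tendsto_intros)
  then have "(\<Sum>\<^sub>\<infinity>i. s i (\<kappa> i * x i)) \<le> (\<Sum>\<^sub>\<infinity>i. liminf (\<lambda>n. s i (\<kappa> i * X n i)))"
    using assms unfolding lsc_real_def
    by (intro infsum_mono) (auto intro: nonneg_summable_on_complete)
  also have "\<dots> \<le> liminf (\<lambda>n. \<Sum>\<^sub>\<infinity>i. s i (\<kappa> i * X n i))"
    by (rule fatou_infsum_ennreal)
  finally show "(\<Sum>\<^sub>\<infinity>i. s i (\<kappa> i * x i)) \<le> liminf (\<lambda>n. \<Sum>\<^sub>\<infinity>i. s i (\<kappa> i * X n i))" .
qed

lemma min_sq_abs_lower: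
  fixes t \<gamma> M :: real
  assumes "\<gamma> > 0" "\<bar>t\<bar> \<le> M"
  shows "\<gamma> / (\<gamma> + M) * t\<^sup>2 \<le> min (t\<^sup>2) (\<gamma> * \<bar>t\<bar>)"
proof -
  have pos: "0 < \<gamma> + M"
    using assms by linarith
  have "\<gamma> / (\<gamma> + M) \<le> 1"
    using assms pos by simp
  then have le_sq: "\<gamma> / (\<gamma> + M) * t\<^sup>2 \<le> t\<^sup>2"
    using assms pos by (intro mult_left_le_one_le) auto
  have "t\<^sup>2 = \<bar>t\<bar> * \<bar>t\<bar>"
    by (simp add: power2_eq_square)
  also have "\<dots> \<le> (\<gamma> + M) * \<bar>t\<bar>"
    using assms by (intro mult_right_mono) auto
  finally have "\<gamma> / (\<gamma> + M) * t\<^sup>2 \<le> \<gamma> / (\<gamma> + M) * ((\<gamma> + M) * \<bar>t\<bar>)"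
    using assms pos by (intro mult_left_mono) auto
  also have "\<dots> = \<gamma> * \<bar>t\<bar>"
    using pos by simp
  finally have "\<gamma> / (\<gamma> + M) * t\<^sup>2 \<le> \<gamma> * \<bar>t\<bar>" .
  with le_sq show ?thesis
    by simp
qed

text \<open>Since \<open>\<bar>x i\<bar> \<le> l2norm x\<close>, every term dominates \<open>\<beta> \<gamma> / (\<gamma> + l2norm x) * (x i)\<^sup>2\<close>.\<close>

lemma separable_growth_lower:
  fixes s :: "'i \<Rightarrow> real \<Rightarrow> ennreal"
  assumes "\<beta> > 0" "\<gamma> > 0"
    and growth: "\<And>i t. ennreal (\<beta> * min (t\<^sup>2) (\<gamma> * \<bar>t\<bar>)) \<le> s i (\<kappa> i * t)"
    and x: "x \<in> l2"
  shows "ennreal (\<beta> * \<gamma> / (\<gamma> + l2norm x) * (l2norm x)\<^sup>2) \<le> (\<Sum>\<^sub>\<infinity>i. s i (\<kappa> i * x i))"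
proof -
  define c where "c = \<beta> * \<gamma> / (\<gamma> + l2norm x)"
  have c: "0 \<le> c"
    using \<open>\<beta> > 0\<close> \<open>\<gamma> > 0\<close> l2norm_nonneg[of x] by (simp add: c_def)
  have "ennreal (c * (l2norm x)\<^sup>2) = ennreal (\<Sum>\<^sub>\<infinity>i. c * (x i)\<^sup>2)"
    by (simp add: l2norm_sq infsum_cmult_right')
  also have "\<dots> = (\<Sum>\<^sub>\<infinity>i. ennreal (c * (x i)\<^sup>2))"
    using x c by (intro ennreal_infsum summable_on_cmult_right) (auto simp: l2_def)
  also have "\<dots> \<le> (\<Sum>\<^sub>\<infinity>i. s i (\<kappa> i * x i))"
  proof (rule infsum_mono)
    fix i
    have "c * (x i)\<^sup>2 = \<beta> * (\<gamma> / (\<gamma> + l2norm x) * (x i)\<^sup>2)"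
      by (simp add: c_def)
    also have "\<dots> \<le> \<beta> * min ((x i)\<^sup>2) (\<gamma> * \<bar>x i\<bar>)"
      using min_sq_abs_lower[OF \<open>\<gamma> > 0\<close> abs_le_l2norm[OF x, of i]] less_imp_le[OF \<open>\<beta> > 0\<close>]
      by (rule mult_left_mono)
    finally have "ennreal (c * (x i)\<^sup>2) \<le> ennreal (\<beta> * min ((x i)\<^sup>2) (\<gamma> * \<bar>x i\<bar>))"
      by (rule ennreal_leI)
    also have "\<dots> \<le> s i (\<kappa> i * x i)"
      by (rule growth)
    finally show "ennreal (c * (x i)\<^sup>2) \<le> s i (\<kappa> i * x i)" .
  qed (rule nonneg_summable_on_complete, simp)+
  finally show ?thesis
    unfolding c_def .
qed

lemma linear_le_quadratic_over_linear:
  fixes N \<beta> \<gamma> :: real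
  assumes "0 \<le> N" "\<beta> > 0" "\<gamma> > 0"
  shows "- (\<beta> * \<gamma>\<^sup>2) + \<beta> * \<gamma> * N \<le> \<beta> * \<gamma> / (\<gamma> + N) * N\<^sup>2"
proof -
  have "(N - \<gamma>) * (\<gamma> + N) \<le> N\<^sup>2"
    by (simp add: power2_eq_square algebra_simps)
  then have "N - \<gamma> \<le> N\<^sup>2 / (\<gamma> + N)"
    using assms by (simp add: pos_le_divide_eq)
  then have "\<beta> * \<gamma> * (N - \<gamma>) \<le> \<beta> * \<gamma> * (N\<^sup>2 / (\<gamma> + N))"
    using assms by (intro mult_left_mono) auto
  then show ?thesis
    by (simp add: power2_eq_square algebra_simps)
qed

lemma norm_coercive_l2_separable:
  fixes s :: "'i \<Rightarrow> real \<Rightarrow> ennreal"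
  assumes "\<beta> > 0" "\<gamma> > 0"
    and growth: "\<And>i t. ennreal (\<beta> * min (t\<^sup>2) (\<gamma> * \<bar>t\<bar>)) \<le> s i (\<kappa> i * t)"
  shows "norm_coercive_l2 (\<lambda>x. \<Sum>\<^sub>\<infinity>i. s i (\<kappa> i * x i))"
  unfolding norm_coercive_l2_def
proof (intro allI impI)
  fix X :: "nat \<Rightarrow> 'i \<Rightarrow> real"
  assume X: "\<forall>n. X n \<in> l2 \<and> (\<Sum>\<^sub>\<infinity>i. s i (\<kappa> i * X n i)) \<noteq> \<infinity>"
    and lim: "filterlim (\<lambda>n. l2norm (X n)) at_top sequentially"
  have lower: "ennreal (- (\<beta> * \<gamma>\<^sup>2) + \<beta> * \<gamma> * l2norm (X n)) \<le> (\<Sum>\<^sub>\<infinity>i. s i (\<kappa> i * X n i))" for n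
  proof -
    have "ennreal (- (\<beta> * \<gamma>\<^sup>2) + \<beta> * \<gamma> * l2norm (X n))
        \<le> ennreal (\<beta> * \<gamma> / (\<gamma> + l2norm (X n)) * (l2norm (X n))\<^sup>2)"
      using assms l2norm_nonneg by (intro ennreal_leI linear_le_quadratic_over_linear)
    also have "\<dots> \<le> (\<Sum>\<^sub>\<infinity>i. s i (\<kappa> i * X n i))"
      using X by (intro separable_growth_lower[OF assms]) simp
    finally show ?thesis .
  qed
  have "filterlim (\<lambda>n. - (\<beta> * \<gamma>\<^sup>2) + \<beta> * \<gamma> * l2norm (X n)) at_top sequentially"
    using assms by (intro filterlim_tendsto_add_at_top[OF tendsto_const]
        filterlim_tendsto_pos_mult_at_top[OF tendsto_const _ lim]) simp
  then have "((\<lambda>n. ennreal (- (\<beta> * \<gamma>\<^sup>2) + \<beta> * \<gamma> * l2norm (X n))) \<longlongrightarrow> top) sequentially"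
    by (simp add: ennreal_tendsto_top_eq_at_top)
  then show "(\<lambda>n. \<Sum>\<^sub>\<infinity>i. s i (\<kappa> i * X n i)) \<longlonglongrightarrow> \<infinity>"
    unfolding infinity_ennreal_def
  proof (rule tendsto_sandwich[rotated 2])
    show "\<forall>\<^sub>F n in sequentially.
        ennreal (- (\<beta> * \<gamma>\<^sup>2) + \<beta> * \<gamma> * l2norm (X n)) \<le> (\<Sum>\<^sub>\<infinity>i. s i (\<kappa> i * X n i))"
      by (intro always_eventually allI lower)
  qed auto
qed

lemma sq_le_min_sq_abs:
  fixes t \<gamma> :: real
  assumes "\<gamma> > 0"
  shows "t\<^sup>2 \<le> min (t\<^sup>2) (\<gamma> * \<bar>t\<bar>) + (min (t\<^sup>2) (\<gamma> * \<bar>t\<bar>))\<^sup>2 / \<gamma>\<^sup>2"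
proof (cases "t\<^sup>2 \<le> \<gamma> * \<bar>t\<bar>")
  case False
  then have "min (t\<^sup>2) (\<gamma> * \<bar>t\<bar>) = \<gamma> * \<bar>t\<bar>"
    by simp
  with assms show ?thesis
    by (simp add: power_mult_distrib)
qed simp

lemma in_l2_if_min_sq_abs_bounded:
  assumes z: "z \<in> l2" and "\<gamma> > 0" "D \<ge> 0"
    and bound: "\<And>i. min ((t i)\<^sup>2) (\<gamma> * \<bar>t i\<bar>) \<le> D * (z i)\<^sup>2"
  shows "t \<in> l2"
proof (rule l2_dominated[OF z])
  fix i
  define m where "m = min ((t i)\<^sup>2) (\<gamma> * \<bar>t i\<bar>)"
  define Z where "Z = (\<Sum>\<^sub>\<infinity>i. (z i)\<^sup>2)"
  have "0 \<le> m"
    using \<open>\<gamma> > 0\<close> by (simp add: m_def)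
  then have "m\<^sup>2 \<le> (D * (z i)\<^sup>2)\<^sup>2"
    using bound[of i] by (simp add: m_def power_mono)
  also have "\<dots> = D\<^sup>2 * (z i)\<^sup>2 * (z i)\<^sup>2"
    by (simp add: power2_eq_square)
  also have "\<dots> \<le> D\<^sup>2 * Z * (z i)\<^sup>2"
    using l2_component_sq_le[OF z, of i] by (simp add: Z_def mult_left_mono mult_right_mono)
  finally have "m\<^sup>2 / \<gamma>\<^sup>2 \<le> D\<^sup>2 * Z / \<gamma>\<^sup>2 * (z i)\<^sup>2"
    using \<open>\<gamma> > 0\<close> by (simp add: divide_right_mono)
  moreover have "(t i)\<^sup>2 \<le> m + m\<^sup>2 / \<gamma>\<^sup>2"
    unfolding m_def by (rule sq_le_min_sq_abs[OF \<open>\<gamma> > 0\<close>])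
  moreover have "m \<le> D * (z i)\<^sup>2"
    unfolding m_def by (rule bound)
  ultimately show "(t i)\<^sup>2 \<le> (D + D\<^sup>2 * Z / \<gamma>\<^sup>2) * (z i)\<^sup>2"
    by (simp add: distrib_right)
qed

text \<open>Comparing the minimiser \<open>P i (z i)\<close> with the competitor \<open>0\<close> bounds its regularisation
  cost by \<open>(z i)\<^sup>2 / 2\<close>; the growth bound turns this into square summability of the
  quotient by \<open>\<kappa> i\<close>.\<close>

lemma prox_quotient_in_l2:
  fixes s :: "'i \<Rightarrow> real \<Rightarrow> ennreal" and P :: "'i \<Rightarrow> real \<Rightarrow> real"
  assumes \<kappa>: "\<And>i. \<kappa> i > 0" and "\<alpha> > 0" "\<beta> > 0" "\<gamma> > 0"
    and s0: "\<And>i. s i 0 = 0"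
    and growth: "\<And>i t. ennreal (\<beta> * min (t\<^sup>2) (\<gamma> * \<bar>t\<bar>)) \<le> s i (\<kappa> i * t)"
    and prox: "\<And>i x. argmin_on UNIV (\<lambda>y. ennreal ((x - y)\<^sup>2 / 2) + ennreal \<alpha> * s i y) = {P i x}"
    and z: "z \<in> l2"
  shows "(\<lambda>i. P i (z i) / \<kappa> i) \<in> l2"
proof (rule in_l2_if_min_sq_abs_bounded[OF z \<open>\<gamma> > 0\<close>])
  show "0 \<le> 1 / (2 * \<alpha> * \<beta>)"
    using \<open>\<alpha> > 0\<close> \<open>\<beta> > 0\<close> by simp
  fix i
  define m where "m = min ((P i (z i) / \<kappa> i)\<^sup>2) (\<gamma> * \<bar>P i (z i) / \<kappa> i\<bar>)"
  have "0 \<le> m"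
    using \<open>\<gamma> > 0\<close> by (simp add: m_def)
  have "ennreal (\<alpha> * (\<beta> * m)) = ennreal \<alpha> * ennreal (\<beta> * m)"
    using \<open>\<alpha> > 0\<close> by (simp add: ennreal_mult')
  also have "\<dots> \<le> ennreal \<alpha> * s i (P i (z i))"
    using growth[where i = i and t = "P i (z i) / \<kappa> i"] \<kappa>[of i]
    by (intro mult_left_mono) (simp_all add: m_def)
  also have "\<dots> \<le> ennreal ((z i - P i (z i))\<^sup>2 / 2) + ennreal \<alpha> * s i (P i (z i))"
    by simp
  also have "\<dots> \<le> ennreal ((z i)\<^sup>2 / 2)"
    using argmin_on_singleton_le[OF prox[where i = i and x = "z i"], of 0] by (simp add: s0)
  finally have "\<alpha> * (\<beta> * m) \<le> (z i)\<^sup>2 / 2"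
    by (simp add: ennreal_le_iff)
  then show "m \<le> 1 / (2 * \<alpha> * \<beta>) * (z i)\<^sup>2"
    using \<open>\<alpha> > 0\<close> \<open>\<beta> > 0\<close> by (simp add: field_simps)
qed

lemma argmin_on_infsum_separable:
  fixes f :: "'i \<Rightarrow> real \<Rightarrow> ennreal"
  assumes strict: "\<And>i y. y \<noteq> p i \<Longrightarrow> f i (p i) < f i y"
    and finite: "(\<Sum>\<^sub>\<infinity>i. f i (p i)) \<noteq> \<infinity>" and "p \<in> D"
  shows "argmin_on D (\<lambda>x. \<Sum>\<^sub>\<infinity>i. f i (x i)) = {p}"
proof (rule argmin_on_eq_singleton[OF \<open>p \<in> D\<close>])
  fix x assume "x \<noteq> p"
  then obtain j where j: "x j \<noteq> p j"
    by blast
  have "f i (p i) \<le> f i y" for i y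
    using strict[of y i] by (cases "y = p i") auto
  then have le: "(\<Sum>\<^sub>\<infinity>i\<in>-{j}. f i (p i)) \<le> (\<Sum>\<^sub>\<infinity>i\<in>-{j}. f i (x i))"
    by (intro infsum_mono) (auto intro: nonneg_summable_on_complete)
  have "(\<Sum>\<^sub>\<infinity>i\<in>-{j}. f i (p i)) \<noteq> \<infinity>"
    using finite infsum_ennreal_split[of "\<lambda>i. f i (p i)" j] by (auto simp: top_unique)
  then have "(\<Sum>\<^sub>\<infinity>i\<in>-{j}. f i (p i)) + f j (p j) < (\<Sum>\<^sub>\<infinity>i\<in>-{j}. f i (p i)) + f j (x j)"
    using strict[OF j] by (simp add: ennreal_add_left_cancel_less)
  also have "\<dots> \<le> (\<Sum>\<^sub>\<infinity>i\<in>-{j}. f i (x i)) + f j (x j)"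
    using le by (rule add_right_mono)
  finally show "(\<Sum>\<^sub>\<infinity>i. f i (p i)) < (\<Sum>\<^sub>\<infinity>i. f i (x i))"
    unfolding infsum_ennreal_split[where j = j] by (simp add: add.commute)
qed

lemma l2_objective_separable:
  fixes r :: "'i \<Rightarrow> ennreal"
  assumes "x \<in> l2" "z \<in> l2" "\<And>i. \<bar>\<kappa> i\<bar> \<le> K"
  shows "ennreal ((l2norm (\<lambda>i. Mk \<kappa> x i - z i))\<^sup>2 / 2) + ennreal \<alpha> * (\<Sum>\<^sub>\<infinity>i. r i)
    = (\<Sum>\<^sub>\<infinity>i. ennreal ((z i - \<kappa> i * x i)\<^sup>2 / 2) + ennreal \<alpha> * r i)"
proof -
  have "Mk \<kappa> x \<in> l2"
    unfolding Mk_def using assms(1,3) by (rule l2_mult_bounded)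
  then have "ennreal ((l2norm (\<lambda>i. Mk \<kappa> x i - z i))\<^sup>2 / 2) = (\<Sum>\<^sub>\<infinity>i. ennreal ((z i - \<kappa> i * x i)\<^sup>2 / 2))"
    using ennreal_l2norm_sq_half[OF l2_diff[OF _ \<open>z \<in> l2\<close>]] by (simp add: Mk_def power2_commute)
  then show ?thesis
    unfolding infsum_ennreal_cmult[symmetric]
    by (simp add: infsum_add nonneg_summable_on_complete)
qed

lemma argmin_l2_prox_quotient:
  fixes s :: "'i \<Rightarrow> real \<Rightarrow> ennreal" and P :: "'i \<Rightarrow> real \<Rightarrow> real"
  assumes \<kappa>: "\<And>i. \<kappa> i > 0" "\<And>i. \<kappa> i \<le> K" and s0: "\<And>i. s i 0 = 0"
    and prox: "\<And>i x. argmin_on UNIV (\<lambda>y. ennreal ((x - y)\<^sup>2 / 2) + ennreal \<alpha> * s i y) = {P i x}"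
    and z: "z \<in> l2" and quotient: "(\<lambda>i. P i (z i) / \<kappa> i) \<in> l2"
  shows "argmin_on l2 (\<lambda>x. ennreal ((l2norm (\<lambda>i. Mk \<kappa> x i - z i))\<^sup>2 / 2)
      + ennreal \<alpha> * (\<Sum>\<^sub>\<infinity>i. s i (\<kappa> i * x i))) = {\<lambda>i. P i (z i) / \<kappa> i}"
proof -
  define f where "f i y = ennreal ((z i - \<kappa> i * y)\<^sup>2 / 2) + ennreal \<alpha> * s i (\<kappa> i * y)" for i y
  have \<kappa>_quotient: "\<kappa> i * (P i (z i) / \<kappa> i) = P i (z i)" for i
    using \<kappa>(1)[of i] by simp
  have "argmin_on l2 (\<lambda>x. ennreal ((l2norm (\<lambda>i. Mk \<kappa> x i - z i))\<^sup>2 / 2)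
      + ennreal \<alpha> * (\<Sum>\<^sub>\<infinity>i. s i (\<kappa> i * x i))) = argmin_on l2 (\<lambda>x. \<Sum>\<^sub>\<infinity>i. f i (x i))"
  proof (rule argmin_on_cong)
    show "ennreal ((l2norm (\<lambda>i. Mk \<kappa> x i - z i))\<^sup>2 / 2) + ennreal \<alpha> * (\<Sum>\<^sub>\<infinity>i. s i (\<kappa> i * x i))
        = (\<Sum>\<^sub>\<infinity>i. f i (x i))" if "x \<in> l2" for x
      using l2_objective_separable[OF that z, of \<kappa> K] \<kappa> by (simp add: f_def less_imp_le)
  qed
  also have "\<dots> = {\<lambda>i. P i (z i) / \<kappa> i}"
  proof (rule argmin_on_infsum_separable[OF _ _ quotient])
    show "f i (P i (z i) / \<kappa> i) < f i y" if "y \<noteq> P i (z i) / \<kappa> i" for i y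
    proof -
      have "\<kappa> i * y \<noteq> P i (z i)"
        using that \<kappa>(1)[of i] by (auto simp: field_simps)
      then show ?thesis
        unfolding f_def \<kappa>_quotient using argmin_on_singleton_less[OF prox] by simp
    qed
    have "f i (P i (z i) / \<kappa> i) \<le> ennreal ((z i)\<^sup>2 / 2)" for i
      using argmin_on_singleton_le[OF prox[where i = i and x = "z i"], of 0] s0[of i]
      unfolding f_def \<kappa>_quotient by simp
    then have "(\<Sum>\<^sub>\<infinity>i. f i (P i (z i) / \<kappa> i)) \<le> (\<Sum>\<^sub>\<infinity>i. ennreal ((z i)\<^sup>2 / 2))"
      by (intro infsum_mono) (auto intro: nonneg_summable_on_complete)
    also have "\<dots> = ennreal ((l2norm z)\<^sup>2 / 2)"
      by (rule ennreal_l2norm_sq_half[OF z, symmetric])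
    finally show "(\<Sum>\<^sub>\<infinity>i. f i (P i (z i) / \<kappa> i)) \<noteq> \<infinity>"
      by (auto simp: top_unique)
  qed
  finally show ?thesis .
qed

lemma Phi_in_l2:
  assumes "nonlinear_reg_filter \<phi>" "\<alpha> > 0" "\<And>i. \<kappa> i > 0" "z \<in> l2"
  shows "Phi \<phi> \<alpha> \<kappa> z \<in> l2"
proof (rule l2_dominated[OF \<open>z \<in> l2\<close>, of _ 1])
  fix i
  have "shrinkage (\<phi> \<alpha> (\<kappa> i))"
    using assms(1,2) assms(3)[of i] by (rule reg_filter_shrinkage)
  then have "\<bar>\<phi> \<alpha> (\<kappa> i) (z i)\<bar> \<le> \<bar>z i\<bar>"
    by (rule shrinkage.abs_le)
  then have "\<bar>\<phi> \<alpha> (\<kappa> i) (z i)\<bar>\<^sup>2 \<le> \<bar>z i\<bar>\<^sup>2"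
    by (rule power_mono) simp
  then show "(Phi \<phi> \<alpha> \<kappa> z i)\<^sup>2 \<le> 1 * (z i)\<^sup>2"
    by (simp add: Phi_def)
qed

theorem lemma4p2:
  fixes \<phi> :: "real \<Rightarrow> real \<Rightarrow> real \<Rightarrow> real"
    and \<kappa> :: "'i::countable \<Rightarrow> real"
  assumes kpos: "\<forall>i. \<kappa> i > 0"
    and kbdd: "\<exists>K. \<forall>i. \<kappa> i \<le> K"
    and filt: "nonlinear_reg_filter \<phi>"
    and A: "assumption_A \<phi>"
  shows "(\<forall>\<alpha>>0. dom_Mk_pinv_Phi \<phi> \<alpha> \<kappa> = l2) \<and>
    (\<exists>s :: 'i \<Rightarrow> real \<Rightarrow> ennreal.
       (\<forall>i. proper_fun UNIV (s i) \<and> convex_fun_on UNIV (s i) \<and> lsc_real (s i) \<and> s i 0 = 0 \<and>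
            (\<forall>\<alpha>>0. \<forall>x. argmin_on UNIV (\<lambda>y. ennreal ((x - y)\<^sup>2 / 2) + ennreal \<alpha> * s i y)
                         = {\<phi> \<alpha> (\<kappa> i) x})) \<and>
       (let R = (\<lambda>x. \<Sum>\<^sub>\<infinity>i. s i (\<kappa> i * x i)) in
          proper_fun l2 R \<and> convex_l2 R \<and> lsc_l2 R \<and> norm_coercive_l2 R \<and>
          (\<forall>\<alpha>>0. \<forall>z\<in>l2.
             argmin_on l2 (\<lambda>x. ennreal ((l2norm (\<lambda>i. Mk \<kappa> x i - z i))\<^sup>2 / 2) + ennreal \<alpha> * R x)
               = {Mk_pinv \<kappa> (Phi \<phi> \<alpha> \<kappa> z)})))"
proof -
  have \<kappa>: "\<And>i. \<kappa> i > 0"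
    using kpos by blast
  obtain K where K: "\<And>i. \<kappa> i \<le> K"
    using kbdd by blast
  obtain s \<beta> \<gamma> where "\<beta> > 0" "\<gamma> > 0" and s: "\<And>i. convex_fun_on UNIV (s i)"
    "\<And>i. lsc_real (s i)" "\<And>i. s i 0 = 0"
    and prox: "\<And>i \<alpha> x. \<alpha> > 0 \<Longrightarrow>
      argmin_on UNIV (\<lambda>y. ennreal ((x - y)\<^sup>2 / 2) + ennreal \<alpha> * s i y) = {\<phi> \<alpha> (\<kappa> i) x}"
    and growth: "\<And>i t. ennreal (\<beta> * min (t\<^sup>2) (\<gamma> * \<bar>t\<bar>)) \<le> s i (\<kappa> i * t)"
    using reg_filter_prox_generators[where \<kappa> = \<kappa>, OF \<kappa> filt A] by blast
  have quotient: "Mk_pinv \<kappa> (Phi \<phi> \<alpha> \<kappa> z) \<in> l2" if "\<alpha> > 0" "z \<in> l2" for \<alpha> z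
    unfolding Mk_pinv_def Phi_def
    by (rule prox_quotient_in_l2[OF \<kappa> that(1) \<open>\<beta> > 0\<close> \<open>\<gamma> > 0\<close> s(3) growth
          prox[OF that(1)] that(2)])
  show ?thesis
    unfolding Let_def
  proof (intro conjI exI[of _ s] allI impI ballI)
    show "dom_Mk_pinv_Phi \<phi> \<alpha> \<kappa> = l2" if "\<alpha> > 0" for \<alpha>
      using quotient[OF that] Phi_in_l2[OF filt that \<kappa>]
      by (auto simp: dom_Mk_pinv_Phi_def dom_Mk_pinv_def Mk_pinv_def)
    show "argmin_on l2 (\<lambda>x. ennreal ((l2norm (\<lambda>i. Mk \<kappa> x i - z i))\<^sup>2 / 2)
        + ennreal \<alpha> * (\<Sum>\<^sub>\<infinity>i. s i (\<kappa> i * x i))) = {Mk_pinv \<kappa> (Phi \<phi> \<alpha> \<kappa> z)}"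
      if "\<alpha> > 0" "z \<in> l2" for \<alpha> z
      unfolding Mk_pinv_def Phi_def
      by (rule argmin_l2_prox_quotient[OF \<kappa> K s(3) prox[OF that(1)] that(2)
            quotient[OF that, unfolded Mk_pinv_def Phi_def]])
    show "proper_fun l2 (\<lambda>x. \<Sum>\<^sub>\<infinity>i. s i (\<kappa> i * x i))"
      unfolding proper_fun_def using s(3) by (intro bexI[of _ "\<lambda>_. 0"]) (simp_all add: l2_def)
    show "proper_fun UNIV (s i)" for i
      unfolding proper_fun_def using s(3) by (intro bexI[of _ 0]) simp_all
    show "norm_coercive_l2 (\<lambda>x. \<Sum>\<^sub>\<infinity>i. s i (\<kappa> i * x i))"
      using \<open>\<beta> > 0\<close> \<open>\<gamma> > 0\<close> growth by (rule norm_coercive_l2_separable)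
  qed (simp_all add: s prox convex_l2_separable lsc_l2_separable)
qed

end
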